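(* There exists a context-free language $L$ such that $L \leftarrow L$ is not context-free.
   Context: Outfix-guided insertion: $x \leftarrow y = \{ x_1 u z v x_2 \mid x = x_1 u v x_2,\ y = u z v,\ u \neq \varepsilon,\ v \neq \varepsilon \}$; for languages, $L_1 \leftarrow L_2 = \bigcup_{x \in L_1, y \in L_2} x \leftarrow y$. *)

theory Defs
  imports Main
begin

text \<open>A production (A, alpha) rewrites nonterminal A into the sentential form alpha,
  where Inl B denotes nonterminal B and Inr a denotes terminal a.\<close>

type_synonym 'a cfg_prods = "(nat \<times> (nat + 'a) list) set"

definition derive1 :: "'a cfg_prods \<Rightarrow> (nat + 'a) list \<Rightarrow> (nat + 'a) list \<Rightarrow> bool" where
  "derive1 P u v \<longleftrightarrow> (\<exists>l A r alpha. u = l @ [Inl A] @ r \<and> (A, alpha) \<in> P \<and> v = l @ alpha @ r)"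

definition cfg_lang :: "'a cfg_prods \<Rightarrow> nat \<Rightarrow> 'a list set" where
  "cfg_lang P S = {w. (derive1 P)\<^sup>*\<^sup>* [Inl S] (map Inr w)}"

definition context_free :: "'a list set \<Rightarrow> bool" where
  "context_free L \<longleftrightarrow> (\<exists>P S. finite P \<and> L = cfg_lang P S)"

definition outfix_ins :: "'a list \<Rightarrow> 'a list \<Rightarrow> 'a list set" where
  "outfix_ins x y = {x1 @ u @ z @ v @ x2 | x1 u z v x2.
      x = x1 @ u @ v @ x2 \<and> y = u @ z @ v \<and> u \<noteq> [] \<and> v \<noteq> []}"

definition outfix_ins_lang :: "'a list set \<Rightarrow> 'a list set \<Rightarrow> 'a list set" where
  "outfix_ins_lang L1 L2 = (\<Union>x\<in>L1. \<Union>y\<in>L2. outfix_ins x y)"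

end

theory Submission
  imports Defs
begin

(*
  L = {0 1^n 2 3^n 6} \<union> {0 1^n 4 5^n 2} is generated by a linear grammar. The letter 0 occurs
  exactly once in every word of L, at the front, so an outfix-guided insertion of y into x must
  start at the front of x; it ends with the last letter of y, which again occurs only once in x.
  Hence every word of L \<leftarrow> L is a word of L or 0 1^m 4 5^m 2 3^n 6 with n \<le> m
  (insert y = 0 1^m 4 5^m 2 into x = 0 1^n 2 3^n 6 through u = 0 1^n, v = 2).
  Pumping 0 1^k 4 5^k 2 3^k 6 for large k can neither touch the letters 0, 2, 4, 6 nor change
  the numbers of 1s, 3s and 5s independently, so it must pump 1s and 3s together; but these
  are separated by 4 5^k 2, which is longer than the pumping window. The pumping lemma for
  context-free grammars is proved with minimal parse trees.
*)

lemma count_list_replicate: "count_list (replicate n a) b = (if a = b then n else 0)"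
  by (induction n) auto

lemma append_eq_split_at_unique:
  assumes "p @ s = q @ c # t" "p \<noteq> []" "last p = c" "c \<notin> set q" "c \<notin> set t"
  shows "p = q @ [c] \<and> s = t"
proof -
  obtain us where "p = q @ us \<and> us @ s = c # t \<or> p @ us = q \<and> s = us @ c # t"
    using assms(1) by (auto simp: append_eq_append_conv2)
  then show ?thesis
  proof (elim disjE conjE)
    assume p: "p = q @ us" and s: "us @ s = c # t"
    then show ?thesis
      using assms(2-5) last_in_set
      by (cases us) (auto simp: Cons_eq_append_conv split: if_splits)
  next
    assume "p @ us = q"
    then show ?thesis
      using assms(2-4) by auto
  qed
qed

lemma append_eq_length_less:
  assumes "s @ f @ t = A @ R" "x \<in> set f" "x \<notin> set R"
  shows "length s < length A"
proof (rule ccontr)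
  assume "\<not> length s < length A"
  then have "f @ t = drop (length s - length A) R"
    using arg_cong[OF assms(1), of "drop (length s)"] by simp
  then have "set f \<subseteq> set R"
    by (metis Un_subset_iff set_append set_drop_subset)
  then show False
    using assms(2,3) by blast
qed

lemma infix_longer_than_middle:
  assumes "s @ f @ t = A @ M @ C" "x \<in> set f" "x \<notin> set (M @ C)" "y \<in> set f" "y \<notin> set (A @ M)"
  shows "length M < length f"
proof -
  have "length s < length A"
    using append_eq_length_less assms(1-3) by metis
  moreover have "rev t @ rev f @ rev s = rev C @ rev (A @ M)"
    using arg_cong[OF assms(1), of rev] by simp
  then have "length (rev t) < length (rev C)"
    using append_eq_length_less assms(4,5) by (metis set_rev)
  moreover have "length s + length f + length t = length A + length M + length C"
    using arg_cong[OF assms(1), of length] by simp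
  ultimately show ?thesis
    by simp
qed

section \<open>Parse trees\<close>

datatype 'a ptree = Leaf "nat + 'a" | Node nat "'a ptree list"

fun root :: "'a ptree \<Rightarrow> nat + 'a" where
  "root (Leaf s) = s"
| "root (Node A ts) = Inl A"

fun fringe :: "'a ptree \<Rightarrow> (nat + 'a) list" where
  "fringe (Leaf s) = [s]"
| "fringe (Node A ts) = concat (map fringe ts)"

fun valid_tree :: "'a cfg_prods \<Rightarrow> 'a ptree \<Rightarrow> bool" where
  "valid_tree P (Leaf s) = True"
| "valid_tree P (Node A ts) = ((A, map root ts) \<in> P \<and> (\<forall>t\<in>set ts. valid_tree P t))"

lemma derive1_append_context: "derive1 P a b \<Longrightarrow> derive1 P (l @ a @ r) (l @ b @ r)"
  unfolding derive1_def by (metis append.assoc)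

lemma derives_append_context:
  "(derive1 P)\<^sup>*\<^sup>* a b \<Longrightarrow> (derive1 P)\<^sup>*\<^sup>* (l @ a @ r) (l @ b @ r)"
  by (induction rule: rtranclp_induct)
    (auto intro: rtranclp.rtrancl_into_rtrancl derive1_append_context)

lemma derives_concat:
  "\<forall>t\<in>set ts. (derive1 P)\<^sup>*\<^sup>* [root t] (fringe t) \<Longrightarrow>
   (derive1 P)\<^sup>*\<^sup>* (map root ts) (concat (map fringe ts))"
proof (induction ts)
  case (Cons t ts)
  have "(derive1 P)\<^sup>*\<^sup>* ([] @ [root t] @ map root ts) ([] @ fringe t @ map root ts)"
    using Cons.prems by (intro derives_append_context) auto
  moreover have "(derive1 P)\<^sup>*\<^sup>* (fringe t @ map root ts @ [])
      (fringe t @ concat (map fringe ts) @ [])"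
    using Cons by (intro derives_append_context) auto
  ultimately show ?case by simp
qed simp

lemma valid_tree_derives: "valid_tree P t \<Longrightarrow> (derive1 P)\<^sup>*\<^sup>* [root t] (fringe t)"
proof (induction t)
  case (Node A ts)
  have "derive1 P [Inl A] (map root ts)"
    using Node.prems unfolding derive1_def by (auto intro!: exI[of _ "[]"])
  moreover have "(derive1 P)\<^sup>*\<^sup>* (map root ts) (concat (map fringe ts))"
    using Node by (intro derives_concat) auto
  ultimately show ?case by simp
qed simp

lemma derives_valid_forest:
  "(derive1 P)\<^sup>*\<^sup>* a b \<Longrightarrow>
   \<exists>ts. (\<forall>t\<in>set ts. valid_tree P t) \<and> map root ts = a \<and> concat (map fringe ts) = b"
proof (induction rule: converse_rtranclp_induct)
  case base
  have "map root (map Leaf b) = b \<and> concat (map fringe (map Leaf b)) = b"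
    by (induction b) auto
  then show ?case by (intro exI[of _ "map Leaf b"]) auto
next
  case (step a a')
  then obtain ts where
    ts: "\<forall>t\<in>set ts. valid_tree P t" "map root ts = a'" "concat (map fringe ts) = b"
    by blast
  from step.hyps(1) obtain l A r alpha where
    d: "a = l @ [Inl A] @ r" "(A, alpha) \<in> P" "a' = l @ alpha @ r"
    unfolding derive1_def by blast
  from ts(2) d(3) obtain ts1 ts2 ts3 where
    s: "ts = ts1 @ ts2 @ ts3" "map root ts1 = l" "map root ts2 = alpha" "map root ts3 = r"
    by (auto simp: map_eq_append_conv append_eq_map_conv)
  let ?ts = "ts1 @ [Node A ts2] @ ts3"
  have "(\<forall>t\<in>set ?ts. valid_tree P t) \<and> map root ?ts = a \<and> concat (map fringe ?ts) = b"
    using ts s d by auto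
  then show ?case by blast
qed

lemma cfg_lang_iff_parse_tree:
  "w \<in> cfg_lang P S \<longleftrightarrow> (\<exists>t. valid_tree P t \<and> root t = Inl S \<and> fringe t = map Inr w)"
proof
  assume "w \<in> cfg_lang P S"
  then have "(derive1 P)\<^sup>*\<^sup>* [Inl S] (map Inr w)"
    unfolding cfg_lang_def by simp
  from derives_valid_forest[OF this] obtain ts where
    ts: "\<forall>t\<in>set ts. valid_tree P t" "map root ts = [Inl S]" "concat (map fringe ts) = map Inr w"
    by (elim exE conjE)
  from ts(2) obtain t where "ts = [t]"
    by (auto simp: map_eq_Cons_conv)
  then show "\<exists>t. valid_tree P t \<and> root t = Inl S \<and> fringe t = map Inr w"
    using ts by auto
next
  assume "\<exists>t. valid_tree P t \<and> root t = Inl S \<and> fringe t = map Inr w"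
  then show "w \<in> cfg_lang P S"
    unfolding cfg_lang_def using valid_tree_derives by force
qed

section \<open>The pumping lemma\<close>

fun tree_size :: "'a ptree \<Rightarrow> nat" where
  "tree_size (Leaf s) = 1"
| "tree_size (Node A ts) = Suc (sum_list (map tree_size ts))"

fun height :: "'a ptree \<Rightarrow> nat" where
  "height (Leaf s) = 0"
| "height (Node A ts) = Suc (Max (insert 0 (height ` set ts)))"

fun nonterms :: "'a ptree \<Rightarrow> nat set" where
  "nonterms (Leaf s) = {}"
| "nonterms (Node A ts) = insert A (\<Union>t\<in>set ts. nonterms t)"

fun repetition_free :: "'a ptree \<Rightarrow> bool" where
  "repetition_free (Leaf s) = True"
| "repetition_free (Node A ts) = (\<forall>t\<in>set ts. repetition_free t \<and> A \<notin> nonterms t)"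

inductive subtree :: "'a ptree \<Rightarrow> 'a ptree \<Rightarrow> bool" where
  subtree_refl: "subtree t t"
| subtree_child: "subtree s c \<Longrightarrow> c \<in> set ts \<Longrightarrow> subtree s (Node A ts)"

lemma subtree_replace:
  assumes "subtree s t" "valid_tree P t"
  shows "\<exists>l r. fringe t = l @ fringe s @ r \<and> valid_tree P s \<and>
    (\<forall>s'. valid_tree P s' \<and> root s' = root s \<longrightarrow>
      (\<exists>t'. valid_tree P t' \<and> root t' = root t \<and> fringe t' = l @ fringe s' @ r \<and>
            tree_size t' + tree_size s = tree_size t + tree_size s'))"
  using assms
proof (induction rule: subtree.induct)
  case (subtree_refl t)
  show ?case
    by (rule exI[of _ "[]"], rule exI[of _ "[]"]) (use subtree_refl in auto)
next
  case (subtree_child s c ts A)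
  from subtree_child.hyps(2) obtain ts1 ts2 where ts: "ts = ts1 @ c # ts2"
    by (meson split_list)
  have "valid_tree P c"
    using subtree_child.prems subtree_child.hyps(2) by auto
  from subtree_child.IH[OF this] obtain l r where lr: "fringe c = l @ fringe s @ r" "valid_tree P s"
    "\<forall>s'. valid_tree P s' \<and> root s' = root s \<longrightarrow>
      (\<exists>c'. valid_tree P c' \<and> root c' = root c \<and> fringe c' = l @ fringe s' @ r \<and>
            tree_size c' + tree_size s = tree_size c + tree_size s')"
    by blast
  show ?case
  proof (rule exI[of _ "concat (map fringe ts1) @ l"], rule exI[of _ "r @ concat (map fringe ts2)"],
      intro conjI allI impI)
    show "fringe (Node A ts) =
        (concat (map fringe ts1) @ l) @ fringe s @ r @ concat (map fringe ts2)"
      using lr ts by simp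
    show "valid_tree P s"
      by fact
    fix s' assume "valid_tree P s' \<and> root s' = root s"
    then obtain c' where c': "valid_tree P c'" "root c' = root c" "fringe c' = l @ fringe s' @ r"
        "tree_size c' + tree_size s = tree_size c + tree_size s'"
      using lr(3) by blast
    show "\<exists>t'. valid_tree P t' \<and> root t' = root (Node A ts) \<and>
        fringe t' = (concat (map fringe ts1) @ l) @ fringe s' @ r @ concat (map fringe ts2) \<and>
        tree_size t' + tree_size s = tree_size (Node A ts) + tree_size s'"
      by (rule exI[of _ "Node A (ts1 @ c' # ts2)"]) (use c' subtree_child.prems ts in auto)
  qed
qed

lemma subtree_pump:
  assumes "subtree s t" "valid_tree P t" "root s = root t"
  shows "\<exists>l r. fringe t = l @ fringe s @ r \<and>
    (\<forall>i. \<exists>t'. valid_tree P t' \<and> root t' = root t \<and>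
       fringe t' = concat (replicate i l) @ fringe s @ concat (replicate i r))"
proof -
  obtain l r where lr: "fringe t = l @ fringe s @ r" "valid_tree P s"
    "\<forall>s'. valid_tree P s' \<and> root s' = root s \<longrightarrow>
      (\<exists>t'. valid_tree P t' \<and> root t' = root t \<and> fringe t' = l @ fringe s' @ r)"
    using subtree_replace[OF assms(1,2)] by meson
  have "\<exists>t'. valid_tree P t' \<and> root t' = root t \<and>
      fringe t' = concat (replicate i l) @ fringe s @ concat (replicate i r)" for i
  proof (induction i)
    case 0
    show ?case
      using lr(2) assms(3) by (intro exI[of _ s]) simp
  next
    case (Suc i)
    then obtain t' where "valid_tree P t'" "root t' = root t"
        "fringe t' = concat (replicate i l) @ fringe s @ concat (replicate i r)"
      by blast
    with lr(3) assms(3) obtain t'' where "valid_tree P t''" "root t'' = root t"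
        "fringe t'' = l @ (concat (replicate i l) @ fringe s @ concat (replicate i r)) @ r"
      by metis
    moreover have "concat (replicate i r) @ r = concat (replicate (Suc i) r)"
      by (induction i) simp_all
    ultimately show ?case
      by auto
  qed
  then show ?thesis
    using lr(1) by blast
qed

lemma subtree_valid: "subtree s t \<Longrightarrow> valid_tree P t \<Longrightarrow> valid_tree P s"
  by (induction rule: subtree.induct) auto

lemma subtree_size_le: "subtree s t \<Longrightarrow> tree_size s \<le> tree_size t"
proof (induction rule: subtree.induct)
  case (subtree_child s c ts A)
  have "tree_size c \<le> sum_list (map tree_size ts)"
    using subtree_child.hyps(2) by (simp add: member_le_sum_list)
  then show ?case
    using subtree_child.IH by simp
qed simp

lemma nonterm_subtree: "B \<in> nonterms t \<Longrightarrow> \<exists>ts. subtree (Node B ts) t"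
proof (induction t)
  case (Node A ts)
  show ?case
  proof (cases "B = A")
    case False
    then obtain s where "s \<in> set ts" "B \<in> nonterms s"
      using Node.prems by auto
    then show ?thesis
      using Node.IH by (meson subtree_child)
  qed (auto intro: subtree_refl)
qed simp

lemma finite_nonterms: "finite (nonterms t)"
  by (induction t) auto

lemma nonterms_subset: "valid_tree P t \<Longrightarrow> nonterms t \<subseteq> fst ` P"
  by (induction t) (auto simp: rev_image_eqI)

lemma height_le_card_nonterms: "repetition_free t \<Longrightarrow> height t \<le> card (nonterms t)"
proof (induction t)
  case (Node A ts)
  show ?case
  proof (cases "\<exists>s\<in>set ts. height s = Max (insert 0 (height ` set ts))")
    case True
    then obtain s where s: "s \<in> set ts" "height s = Max (insert 0 (height ` set ts))"
      by blast
    have "height s \<le> card (nonterms s)"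
      using Node.IH[OF s(1)] Node.prems s(1) by simp
    also have "\<dots> < card (insert A (nonterms s))"
      using Node.prems s(1) by (simp add: finite_nonterms)
    also have "\<dots> \<le> card (nonterms (Node A ts))"
      using s(1) by (intro card_mono) (auto simp: finite_nonterms)
    finally show ?thesis
      using s(2) by (metis Suc_leI height.simps(2))
  next
    case False
    then have "Max (insert 0 (height ` set ts)) = 0"
      using Max_in[of "insert 0 (height ` set ts)"] by auto
    moreover have "card (nonterms (Node A ts)) > 0"
      by (simp add: card_gt_0_iff finite_nonterms)
    ultimately show ?thesis
      by simp
  qed
qed simp

definition rhs_bound :: "'a cfg_prods \<Rightarrow> nat" where
  "rhs_bound P = Max (insert 1 ((length \<circ> snd) ` P))"

lemma rhs_bound_pos: "finite P \<Longrightarrow> 1 \<le> rhs_bound P"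
  unfolding rhs_bound_def by simp

lemma length_rhs_le_rhs_bound: "finite P \<Longrightarrow> (A, \<alpha>) \<in> P \<Longrightarrow> length \<alpha> \<le> rhs_bound P"
  unfolding rhs_bound_def by (rule Max_ge) force+

lemma length_fringe_le_pow_height:
  assumes "finite P"
  shows "valid_tree P t \<Longrightarrow> length (fringe t) \<le> rhs_bound P ^ height t"
proof (induction t)
  case (Node A ts)
  let ?H = "Max (insert 0 (height ` set ts))"
  have "length (fringe s) \<le> rhs_bound P ^ ?H" if "s \<in> set ts" for s
  proof -
    have "length (fringe s) \<le> rhs_bound P ^ height s"
      using Node that by auto
    also have "\<dots> \<le> rhs_bound P ^ ?H"
      using that rhs_bound_pos[OF assms] by (intro power_increasing) auto
    finally show ?thesis .
  qed
  then have "length (fringe (Node A ts)) \<le> length ts * rhs_bound P ^ ?H"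
    using sum_list_mono[of ts "\<lambda>s. length (fringe s)" "\<lambda>_. rhs_bound P ^ ?H"]
    by (simp add: length_concat sum_list_triv comp_def)
  also have "\<dots> \<le> rhs_bound P * rhs_bound P ^ ?H"
    using Node.prems length_rhs_le_rhs_bound[OF assms, of A "map root ts"] by simp
  finally show ?case
    by simp
qed simp

lemma repetition_free_fringe_bound:
  assumes "finite P" "valid_tree P t" "repetition_free t"
  shows "length (fringe t) \<le> rhs_bound P ^ card (fst ` P)"
proof -
  have "height t \<le> card (fst ` P)"
    using height_le_card_nonterms[OF assms(3)] nonterms_subset[OF assms(2)] assms(1)
    by (meson card_mono finite_imageI le_trans)
  then show ?thesis
    using length_fringe_le_pow_height[OF assms(1,2)] rhs_bound_pos[OF assms(1)]
    by (meson le_trans power_increasing)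
qed

lemma lowest_repetition:
  "\<not> repetition_free t \<Longrightarrow> \<exists>B ts ts'. subtree (Node B ts) t \<and> (\<forall>c\<in>set ts. repetition_free c) \<and>
     subtree (Node B ts') (Node B ts) \<and> tree_size (Node B ts') < tree_size (Node B ts)"
proof (induction t)
  case (Node A ts)
  show ?case
  proof (cases "\<forall>c\<in>set ts. repetition_free c")
    case True
    then obtain c where c: "c \<in> set ts" "A \<in> nonterms c"
      using Node.prems by auto
    then obtain ts' where "subtree (Node A ts') c"
      using nonterm_subtree by blast
    moreover have "tree_size c < tree_size (Node A ts)"
      using c(1) by (simp add: member_le_sum_list le_imp_less_Suc)
    ultimately show ?thesis
      using True c(1) subtree_size_le by (meson le_less_trans subtree.intros)
  next
    case False
    then obtain c where "c \<in> set ts" "\<not> repetition_free c"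
      by blast
    then show ?thesis
      using Node.IH by (meson subtree_child)
  qed
qed simp

lemma long_minimal_tree_pumping:
  assumes fin: "finite P" and t: "valid_tree P t"
    and minimal: "\<And>t'. valid_tree P t' \<Longrightarrow> root t' = root t \<Longrightarrow> fringe t' = fringe t \<Longrightarrow>
      tree_size t \<le> tree_size t'"
    and long: "rhs_bound P ^ Suc (card (fst ` P)) < length (fringe t)"
  shows "\<exists>l p m q r. fringe t = l @ p @ m @ q @ r \<and>
    length (p @ m @ q) \<le> rhs_bound P ^ Suc (card (fst ` P)) \<and> p @ q \<noteq> [] \<and>
    (\<forall>i. \<exists>t'. valid_tree P t' \<and> root t' = root t \<and>
       fringe t' = l @ concat (replicate i p) @ m @ concat (replicate i q) @ r)"
proof -
  let ?N = "card (fst ` P)"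
  have "\<not> repetition_free t"
  proof
    assume "repetition_free t"
    then have "length (fringe t) \<le> rhs_bound P ^ ?N"
      by (rule repetition_free_fringe_bound[OF fin t])
    also have "\<dots> \<le> rhs_bound P ^ Suc ?N"
      using rhs_bound_pos[OF fin] by (intro power_increasing) auto
    finally show False
      using long by simp
  qed
  then obtain B ts ts' where outer: "subtree (Node B ts) t" "\<forall>c\<in>set ts. repetition_free c"
      and inner: "subtree (Node B ts') (Node B ts)" "tree_size (Node B ts') < tree_size (Node B ts)"
    using lowest_repetition by blast
  have outer_valid: "valid_tree P (Node B ts)"
    using subtree_valid outer(1) t by blast
  have "length (fringe (Node B ts)) \<le> length ts * rhs_bound P ^ ?N"
    using repetition_free_fringe_bound[OF fin] outer(2) outer_valid
      sum_list_mono[of ts "\<lambda>s. length (fringe s)" "\<lambda>_. rhs_bound P ^ ?N"]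
    by (simp add: length_concat sum_list_triv comp_def)
  also have "\<dots> \<le> rhs_bound P ^ Suc ?N"
    using length_rhs_le_rhs_bound[OF fin, of B "map root ts"] outer_valid by simp
  finally have outer_short: "length (fringe (Node B ts)) \<le> rhs_bound P ^ Suc ?N" .
  obtain l r where lr: "fringe t = l @ fringe (Node B ts) @ r"
      "\<forall>s'. valid_tree P s' \<and> root s' = Inl B \<longrightarrow>
        (\<exists>t'. valid_tree P t' \<and> root t' = root t \<and> fringe t' = l @ fringe s' @ r \<and>
          tree_size t' + tree_size (Node B ts) = tree_size t + tree_size s')"
    using subtree_replace[OF outer(1) t] by auto
  obtain p q where pq: "fringe (Node B ts) = p @ fringe (Node B ts') @ q"
      "\<forall>i. \<exists>s. valid_tree P s \<and> root s = Inl B \<and>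
        fringe s = concat (replicate i p) @ fringe (Node B ts') @ concat (replicate i q)"
    using subtree_pump[OF inner(1) outer_valid] by auto
  have "p @ q \<noteq> []"
  proof
    \<comment> \<open>otherwise grafting the inner repetition in place of the outer one gives a smaller tree\<close>
    assume "p @ q = []"
    then have "fringe (Node B ts) = fringe (Node B ts')"
      using pq(1) by simp
    moreover obtain t' where t': "valid_tree P t'" "root t' = root t"
        "fringe t' = l @ fringe (Node B ts') @ r"
        "tree_size t' + tree_size (Node B ts) = tree_size t + tree_size (Node B ts')"
      using lr(2) subtree_valid[OF inner(1) outer_valid] by (metis root.simps(2))
    ultimately have "tree_size t \<le> tree_size t'"
      using minimal lr(1) by simp
    then show False
      using t'(4) inner(2) by linarith
  qed
  moreover have "\<exists>t'. valid_tree P t' \<and> root t' = root t \<and>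
      fringe t' = l @ concat (replicate i p) @ fringe (Node B ts') @ concat (replicate i q) @ r"
    for i
  proof -
    obtain s where s: "valid_tree P s" "root s = Inl B"
        "fringe s = concat (replicate i p) @ fringe (Node B ts') @ concat (replicate i q)"
      using pq(2) by blast
    then obtain t' where "valid_tree P t'" "root t' = root t" "fringe t' = l @ fringe s @ r"
      using lr(2) by blast
    then show ?thesis
      using s(3) by auto
  qed
  moreover have "fringe t = l @ p @ fringe (Node B ts') @ q @ r"
    "length (p @ fringe (Node B ts') @ q) \<le> rhs_bound P ^ Suc ?N"
    using lr(1) pq(1) outer_short by simp_all
  ultimately show ?thesis
    by blast
qed

lemma cfg_pumping:
  assumes "finite P"
  shows "\<exists>K. \<forall>w\<in>cfg_lang P S. K < length w \<longrightarrow> (\<exists>a p m q b. w = a @ p @ m @ q @ b \<and>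
    length (p @ m @ q) \<le> K \<and> p @ q \<noteq> [] \<and>
    (\<forall>i. a @ concat (replicate i p) @ m @ concat (replicate i q) @ b \<in> cfg_lang P S))"
proof (rule exI[of _ "rhs_bound P ^ Suc (card (fst ` P))"], intro ballI impI)
  let ?K = "rhs_bound P ^ Suc (card (fst ` P))"
  fix w assume w: "w \<in> cfg_lang P S" "?K < length w"
  let ?parse = "\<lambda>t. valid_tree P t \<and> root t = Inl S \<and> fringe t = map Inr w"
  obtain t where t: "?parse t" and minimal: "\<And>t'. ?parse t' \<Longrightarrow> tree_size t \<le> tree_size t'"
    using w(1) ex_has_least_nat[of ?parse _ tree_size] unfolding cfg_lang_iff_parse_tree by metis
  then obtain l p m q r where
    pump: "fringe t = l @ p @ m @ q @ r" "length (p @ m @ q) \<le> ?K" "p @ q \<noteq> []"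
      "\<forall>i. \<exists>t'. valid_tree P t' \<and> root t' = root t \<and>
         fringe t' = l @ concat (replicate i p) @ m @ concat (replicate i q) @ r"
    using long_minimal_tree_pumping[OF assms, of t] w(2) by auto
  have "map Inr w = l @ p @ m @ q @ r"
    using t pump(1) by simp
  then obtain a p' m' q' b where
    "w = a @ p' @ m' @ q' @ b"
    "l = map Inr a" "p = map Inr p'" "m = map Inr m'" "q = map Inr q'" "r = map Inr b"
    by (auto simp: map_eq_append_conv append_eq_map_conv)
  moreover have "a @ concat (replicate i p') @ m' @ concat (replicate i q') @ b \<in> cfg_lang P S"
    for i
    unfolding cfg_lang_iff_parse_tree
    using pump(4) t calculation by (simp add: map_concat)
  moreover have "length (p' @ m' @ q') \<le> ?K" "p' @ q' \<noteq> []"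
    using pump(2,3) calculation(3-5) by auto
  ultimately show "\<exists>a p m q b. w = a @ p @ m @ q @ b \<and> length (p @ m @ q) \<le> ?K \<and> p @ q \<noteq> [] \<and>
      (\<forall>i. a @ concat (replicate i p) @ m @ concat (replicate i q) @ b \<in> cfg_lang P S)"
    by blast
qed

section \<open>Linear grammars\<close>

lemma terminal_root_Leaf: "root t = Inr a \<Longrightarrow> t = Leaf (Inr a)"
  by (cases t) auto

lemma cfg_lang_linear_unfold:
  assumes linear: "\<And>\<alpha>. (A, \<alpha>) \<in> P \<Longrightarrow> (\<exists>c. \<alpha> = [Inr c]) \<or> (\<exists>a B b. \<alpha> = [Inr a, Inl B, Inr b])"
  shows "w \<in> cfg_lang P A \<longleftrightarrow> (A, map Inr w) \<in> P \<or>
    (\<exists>a B b v. (A, [Inr a, Inl B, Inr b]) \<in> P \<and> v \<in> cfg_lang P B \<and> w = a # v @ [b])"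
proof
  assume "w \<in> cfg_lang P A"
  then obtain t where t: "valid_tree P t" "root t = Inl A" "fringe t = map Inr w"
    unfolding cfg_lang_iff_parse_tree by blast
  then obtain ts where ts: "t = Node A ts"
    by (cases t) auto
  then have prod: "(A, map root ts) \<in> P"
    using t(1) by simp
  from linear[OF this] show "(A, map Inr w) \<in> P \<or>
    (\<exists>a B b v. (A, [Inr a, Inl B, Inr b]) \<in> P \<and> v \<in> cfg_lang P B \<and> w = a # v @ [b])"
  proof (elim disjE exE)
    fix c assume "map root ts = [Inr c]"
    then have "ts = [Leaf (Inr c)]"
      by (auto simp: map_eq_Cons_conv terminal_root_Leaf)
    then show ?thesis
      using prod t(3) ts by simp
  next
    fix a B b assume roots: "map root ts = [Inr a, Inl B, Inr b]"
    then obtain s where s: "ts = [Leaf (Inr a), s, Leaf (Inr b)]" "root s = Inl B"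
      by (auto simp: map_eq_Cons_conv terminal_root_Leaf)
    then have "map Inr w = Inr a # fringe s @ [Inr b]"
      using t(3) ts by simp
    then obtain v where "w = a # v @ [b]" "fringe s = map Inr v"
      by (auto simp: map_eq_Cons_conv map_eq_append_conv)
    moreover have "v \<in> cfg_lang P B"
      unfolding cfg_lang_iff_parse_tree using calculation s t(1) ts by auto
    moreover have "(A, [Inr a, Inl B, Inr b]) \<in> P"
      using prod roots by simp
    ultimately show ?thesis
      by blast
  qed
next
  assume "(A, map Inr w) \<in> P \<or>
    (\<exists>a B b v. (A, [Inr a, Inl B, Inr b]) \<in> P \<and> v \<in> cfg_lang P B \<and> w = a # v @ [b])"
  then show "w \<in> cfg_lang P A"
  proof (elim disjE exE conjE)
    assume "(A, map Inr w) \<in> P"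
    then show ?thesis
      unfolding cfg_lang_iff_parse_tree
      by (intro exI[of _ "Node A (map (Leaf \<circ> Inr) w)"]) (simp add: comp_def)
  next
    fix a B b v
    assume "(A, [Inr a, Inl B, Inr b]) \<in> P" "v \<in> cfg_lang P B" "w = a # v @ [b]"
    then obtain s where "valid_tree P s" "root s = Inl B" "fringe s = map Inr v"
      unfolding cfg_lang_iff_parse_tree by blast
    then show ?thesis
      unfolding cfg_lang_iff_parse_tree using \<open>(A, _) \<in> P\<close> \<open>w = _\<close>
      by (intro exI[of _ "Node A [Leaf (Inr a), s, Leaf (Inr b)]"]) simp
  qed
qed

lemma cfg_lang_self_embedding:
  assumes prods: "\<And>\<alpha>. (A, \<alpha>) \<in> P \<longleftrightarrow> \<alpha> = [Inr a, Inl A, Inr b] \<or> \<alpha> = [Inr c]"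
  shows "cfg_lang P A = range (\<lambda>n. replicate n a @ c # replicate n b)"
proof -
  have linear: "(\<exists>c. \<alpha> = [Inr c]) \<or> (\<exists>a B b. \<alpha> = [Inr a, Inl B, Inr b])" if "(A, \<alpha>) \<in> P" for \<alpha>
    using that prods by blast
  have terminal: "(A, map Inr w) \<in> P \<longleftrightarrow> w = [c]" for w
    unfolding prods by (cases w) auto
  have unfold: "w \<in> cfg_lang P A \<longleftrightarrow> w = [c] \<or> (\<exists>v. v \<in> cfg_lang P A \<and> w = a # v @ [b])" for w
    by (subst cfg_lang_linear_unfold[OF linear]) (auto simp: terminal prods)
  have "\<exists>n. w = replicate n a @ c # replicate n b" if "w \<in> cfg_lang P A" for w
    using that
  proof (induction w rule: length_induct)
    case (1 w)
    then consider "w = [c]" | v where "v \<in> cfg_lang P A" "w = a # v @ [b]"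
      using unfold[of w] by blast
    then show ?case
    proof cases
      case 1
      then show ?thesis by (intro exI[of _ 0]) simp
    next
      case 2
      then have "length v < length w"
        by simp
      then obtain n where "v = replicate n a @ c # replicate n b"
        using "1.IH" 2(1) by blast
      then show ?thesis
        using 2 by (intro exI[of _ "Suc n"]) (simp add: replicate_append_same)
    qed
  qed
  moreover have "replicate n a @ c # replicate n b \<in> cfg_lang P A" for n
  proof (induction n)
    case (Suc n)
    have "replicate (Suc n) a @ c # replicate (Suc n) b =
        a # (replicate n a @ c # replicate n b) @ [b]"
      by (simp add: replicate_append_same)
    then show ?case
      using Suc unfold[of "replicate (Suc n) a @ c # replicate (Suc n) b"] by blast
  qed (simp add: unfold[of "[c]"])
  ultimately show ?thesis
    by blast
qed

section \<open>The counterexample\<close>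

definition example_grammar :: "nat cfg_prods" where
  "example_grammar = {(0, [Inr 0, Inl 1, Inr 6]), (0, [Inr 0, Inl 2, Inr 2]),
        (1, [Inr 1, Inl 1, Inr 3]), (1, [Inr 2]),
        (2, [Inr 1, Inl 2, Inr 5]), (2, [Inr 4])}"

abbreviation example_lang :: "nat list set" where
  "example_lang \<equiv> cfg_lang example_grammar 0"

definition x_word :: "nat \<Rightarrow> nat list" where
  "x_word n = 0 # replicate n 1 @ 2 # replicate n 3 @ [6]"

definition y_word :: "nat \<Rightarrow> nat list" where
  "y_word n = 0 # replicate n 1 @ 4 # replicate n 5 @ [2]"

lemma example_lang_eq: "example_lang = range x_word \<union> range y_word"
proof -
  have x_middles: "cfg_lang example_grammar 1 = range (\<lambda>n. replicate n 1 @ 2 # replicate n 3)"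
    by (rule cfg_lang_self_embedding) (auto simp: example_grammar_def)
  have y_middles: "cfg_lang example_grammar 2 = range (\<lambda>n. replicate n 1 @ 4 # replicate n 5)"
    by (rule cfg_lang_self_embedding) (auto simp: example_grammar_def)
  have no_terminal_rhs: "(0, map Inr w) \<notin> example_grammar" for w
    by (auto simp: example_grammar_def map_eq_Cons_conv)
  have "w \<in> example_lang \<longleftrightarrow>
      w \<in> (\<lambda>v. 0 # v @ [6]) ` cfg_lang example_grammar 1 \<or>
      w \<in> (\<lambda>v. 0 # v @ [2]) ` cfg_lang example_grammar 2" for w
    by (subst cfg_lang_linear_unfold) (auto simp: example_grammar_def no_terminal_rhs)
  then have "example_lang =
      (\<lambda>v. 0 # v @ [6]) ` cfg_lang example_grammar 1 \<union>
      (\<lambda>v. 0 # v @ [2]) ` cfg_lang example_grammar 2"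
    by blast
  then show ?thesis
    unfolding x_middles y_middles x_word_def[abs_def] y_word_def[abs_def] by (simp add: image_image)
qed

lemma outfix_ins_unique_first_letter:
  assumes "r \<in> outfix_ins (a # x) y" "a \<notin> set x" "hd y = a"
  shows "\<exists>p x2. a # x = p @ x2 \<and> r = y @ x2 \<and> p \<noteq> [] \<and> last p = last y \<and>
    (\<forall>c. count_list p c \<le> count_list y c)"
proof -
  obtain x1 u z v x2 where d: "r = x1 @ u @ z @ v @ x2" "a # x = x1 @ u @ v @ x2"
      "y = u @ z @ v" "u \<noteq> []" "v \<noteq> []"
    using assms(1) unfolding outfix_ins_def by blast
  have "hd u = a"
    using d(3,4) assms(3) by simp
  then have "x1 = []"
    using d(2,4) assms(2) by (cases u; auto simp: Cons_eq_append_conv)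
  then show ?thesis
    using d by (intro exI[of _ "u @ v"] exI[of _ x2]) auto
qed

definition outfix_shapes :: "nat list set" where
  "outfix_shapes = range x_word \<union> range y_word \<union> {y_word m @ replicate n 3 @ [6] | m n. n \<le> m}"

lemma outfix_ins_example_subset: "outfix_ins_lang example_lang example_lang \<subseteq> outfix_shapes"
proof
  fix r assume "r \<in> outfix_ins_lang example_lang example_lang"
  then obtain x y where x: "x \<in> range x_word \<union> range y_word"
      and y: "y \<in> range x_word \<union> range y_word" and r: "r \<in> outfix_ins x y"
    unfolding outfix_ins_lang_def example_lang_eq by blast
  obtain x' where x': "x = 0 # x'" "0 \<notin> set x'"
    using x by (auto simp: x_word_def y_word_def)
  have "hd y = 0"
    using y by (auto simp: x_word_def y_word_def)
  with outfix_ins_unique_first_letter[of r 0 x' y] r x' obtain p x2 where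
    d: "x = p @ x2" "r = y @ x2" "p \<noteq> []" "last p = last y" "\<forall>c. count_list p c \<le> count_list y c"
    by auto
  have "last p \<in> set x"
    using d(1,3) by simp
  from y consider m where "y = x_word m" | m where "y = y_word m"
    by blast
  then show "r \<in> outfix_shapes"
  proof cases
    case (1 m)
    then have "last p = 6"
      using d(4) by (simp add: x_word_def)
    then obtain n where "x = (0 # replicate n 1 @ 2 # replicate n 3) @ 6 # []"
      using x \<open>last p \<in> set x\<close> by (auto simp: x_word_def y_word_def)
    then have "x2 = []"
      using append_eq_split_at_unique[of p x2 _ 6 "[]"] d(1,3) \<open>last p = 6\<close> by simp
    then show ?thesis
      using 1 d(2) unfolding outfix_shapes_def by simp
  next
    case (2 m)
    then have "last p = 2"
      using d(4) by (simp add: y_word_def)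
    from x consider n where "x = (0 # replicate n 1) @ 2 # replicate n 3 @ [6]"
      | n where "x = (0 # replicate n 1 @ 4 # replicate n 5) @ 2 # []"
      by (auto simp: x_word_def y_word_def)
    then show ?thesis
    proof cases
      case (1 n)
      then have "p = 0 # replicate n 1 @ [2]" "x2 = replicate n 3 @ [6]"
        using append_eq_split_at_unique[of p x2 _ 2 "replicate n 3 @ [6]"] d(1,3) \<open>last p = 2\<close>
        by simp_all
      moreover have "count_list p 1 \<le> count_list y 1"
        using d(5) by blast
      ultimately have "n \<le> m"
        using 2 by (simp add: y_word_def count_list_replicate)
      then show ?thesis
        using 2 d(2) \<open>x2 = _\<close> unfolding outfix_shapes_def by blast
    next
      case (2 n)
      then have "x2 = []"
        using append_eq_split_at_unique[of p x2 _ 2 "[]"] d(1,3) \<open>last p = 2\<close> by simp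
      then show ?thesis
        using \<open>y = y_word m\<close> d(2) unfolding outfix_shapes_def by simp
    qed
  qed
qed

lemma outfix_shapes_counts:
  assumes "w \<in> outfix_shapes"
  shows "count_list w 0 = 1" "count_list w 2 = 1"
    and "count_list w 4 = 0 \<Longrightarrow> count_list w 5 = 0"
    and "count_list w 6 = 0 \<Longrightarrow> count_list w 3 = 0"
    and "count_list w 4 = 1 \<Longrightarrow> count_list w 1 = count_list w 5 \<and> count_list w 3 \<le> count_list w 1"
  using assms unfolding outfix_shapes_def
  by (auto simp: x_word_def y_word_def count_list_replicate)

lemma outfix_shapes_not_pumpable:
  assumes split: "y_word k @ replicate k 3 @ [6] = a @ p @ m @ q @ b"
    and short: "length (p @ m @ q) < k" and nonempty: "p @ q \<noteq> []"
    and down: "a @ m @ b \<in> outfix_shapes" and up: "a @ p @ p @ m @ q @ q @ b \<in> outfix_shapes"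
  shows False
proof -
  let ?R = "y_word k @ replicate k 3 @ [6]"
  define e where "e c = count_list (a @ m @ b) c" for c
  define d where "d c = count_list (p @ q) c" for c
  have R: "count_list ?R c = e c + d c" for c
    unfolding split e_def d_def by simp
  have R_letters:
    "count_list ?R c = (if c \<in> {0, 2, 4, 6} then 1 else if c \<in> {1, 3, 5} then k else 0)" for c
    by (simp add: y_word_def count_list_replicate)
  have up_count: "count_list (a @ p @ p @ m @ q @ q @ b) c = e c + 2 * d c" for c
    unfolding e_def d_def by simp
  have d_short: "d c < k" for c
    using count_le_length[of "p @ q" c] short unfolding d_def by simp
  note counts_down = outfix_shapes_counts[OF down, folded e_def]
  note counts_up = outfix_shapes_counts[OF up, unfolded up_count]
  have d0: "d 0 = 0" and d2: "d 2 = 0"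
    using counts_down(1,2) R[of 0] R[of 2] R_letters[of 0] R_letters[of 2] by simp_all
  have d4: "d 4 = 0"
  proof (rule ccontr)
    assume "d 4 \<noteq> 0"
    then have "e 4 = 0"
      using R[of 4] R_letters[of 4] by simp
    then have "d 5 = k"
      using counts_down(3) R[of 5] R_letters[of 5] by simp
    then show False
      using d_short[of 5] by simp
  qed
  have d6: "d 6 = 0"
  proof (rule ccontr)
    assume "d 6 \<noteq> 0"
    then have "e 6 = 0"
      using R[of 6] R_letters[of 6] by simp
    then have "d 3 = k"
      using counts_down(4) R[of 3] R_letters[of 3] by simp
    then show False
      using d_short[of 3] by simp
  qed
  have "e 4 = 1"
    using d4 R[of 4] R_letters[of 4] by simp
  then have "d 1 = d 5 \<and> d 1 = d 3"
    using counts_down(5) counts_up(5) d4 R[of 1] R[of 3] R[of 5]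
      R_letters[of 1] R_letters[of 3] R_letters[of 5] by auto
  moreover obtain c where c: "c \<in> set (p @ q)"
    using nonempty by (metis list.set_intros(1) neq_Nil_conv)
  then have "d c \<noteq> 0"
    unfolding d_def by (simp add: count_list_0_iff)
  moreover have "count_list ?R c \<noteq> 0"
    using R[of c] \<open>d c \<noteq> 0\<close> by simp
  ultimately have "d 1 \<noteq> 0" "d 3 \<noteq> 0"
    using d0 d2 d4 d6 R_letters[of c] by (auto split: if_splits)
  then have one: "1 \<in> set (p @ m @ q)" and three: "3 \<in> set (p @ m @ q)"
    unfolding d_def by (auto simp: count_list_0_iff)
  have "a @ (p @ m @ q) @ b =
      (0 # replicate k 1) @ (4 # replicate k 5 @ [2]) @ (replicate k 3 @ [6])"
    using split by (simp add: y_word_def)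
  from infix_longer_than_middle[OF this one _ three] have "k + 2 < length (p @ m @ q)"
    by simp
  then show False
    using short by simp
qed

lemma not_context_free_between:
  assumes witnesses: "\<And>k. y_word k @ replicate k 3 @ [6] \<in> M" and shapes: "M \<subseteq> outfix_shapes"
  shows "\<not> context_free M"
proof
  assume "context_free M"
  then obtain P S where fin: "finite P" and M: "M = cfg_lang P S"
    unfolding context_free_def by blast
  obtain K where K: "\<forall>w\<in>M. K < length w \<longrightarrow> (\<exists>a p m q b. w = a @ p @ m @ q @ b \<and>
      length (p @ m @ q) \<le> K \<and> p @ q \<noteq> [] \<and>
      (\<forall>i. a @ concat (replicate i p) @ m @ concat (replicate i q) @ b \<in> M))"
    using cfg_pumping[OF fin, of S] unfolding M by (elim exE)
  let ?w = "y_word (Suc K) @ replicate (Suc K) 3 @ [6]"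
  have "K < length ?w"
    by (simp add: y_word_def)
  from K[rule_format, OF witnesses this] obtain a p m q b where split: "?w = a @ p @ m @ q @ b"
      and short: "length (p @ m @ q) \<le> K" and nonempty: "p @ q \<noteq> []"
      and pumped: "\<forall>i. a @ concat (replicate i p) @ m @ concat (replicate i q) @ b \<in> M"
    by (elim exE conjE)
  have "a @ m @ b \<in> M" "a @ p @ p @ m @ q @ q @ b \<in> M"
    using pumped[rule_format, of 0] pumped[rule_format, of 2] by (simp_all add: numeral_2_eq_2)
  then have "a @ m @ b \<in> outfix_shapes" "a @ p @ p @ m @ q @ q @ b \<in> outfix_shapes"
    using shapes by blast+
  moreover have "length (p @ m @ q) < Suc K"
    using short by simp
  ultimately show False
    using outfix_shapes_not_pumpable[OF split _ nonempty] by blast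
qed

lemma outfix_ins_witness: "y_word k @ replicate k 3 @ [6] \<in> outfix_ins (x_word k) (y_word k)"
  unfolding outfix_ins_def x_word_def y_word_def
  by (rule CollectI, rule exI[of _ "[]"], rule exI[of _ "0 # replicate k 1"],
      rule exI[of _ "4 # replicate k 5"], rule exI[of _ "[2]"],
      rule exI[of _ "replicate k 3 @ [6]"]) simp

theorem theorem5p1:
  shows "\<exists>L :: nat list set. context_free L \<and> \<not> context_free (outfix_ins_lang L L)"
proof (intro exI conjI)
  show "context_free example_lang"
    unfolding context_free_def
    by (intro exI[of _ example_grammar] exI[of _ 0]) (simp add: example_grammar_def)
  have "y_word k @ replicate k 3 @ [6] \<in> outfix_ins_lang example_lang example_lang" for k
    unfolding outfix_ins_lang_def example_lang_eq using outfix_ins_witness by blast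
  then show "\<not> context_free (outfix_ins_lang example_lang example_lang)"
    using not_context_free_between outfix_ins_example_subset by blast
qed

end
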